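(* Let $P$ be a simple closed $n$-gon, $n\ge4$, in $\mathbb{R}^2$, and let $a\in\mathbb{R}^2\setminus P$. If every ray emanating from $a$ meets $P$, then $a$ sees via $\mathbb{R}^2\setminus P$ two non-adjacent vertices of $P$, i.e. there are vertices $c,c'$ of $P$ that are not joined by an edge of $P$ (and are distinct) with $]a,c[\,\subset\mathbb{R}^2\setminus P$ and $]a,c'[\,\subset\mathbb{R}^2\setminus P$.
   Context: A simple closed $n$-gon is $P=\bigcup_{i=1}^n[p_{i-1},p_i]$ with distinct vertices $p_0,\dots,p_{n-1}$, $p_n=p_0$, whose edges meet only in common endpoints of consecutive edges. A ray emanating from $a$ is a set $\{a+\lambda w:\lambda\ge0\}$ with $w\ne0$. $]x,y[$ denotes the open segment. *)

theory Defs
  imports "HOL-Analysis.Analysis"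
begin

definition poly_edge :: "(nat \<Rightarrow> real^2) \<Rightarrow> nat \<Rightarrow> nat \<Rightarrow> (real^2) set" where
  "poly_edge p n i = closed_segment (p i) (p (Suc i mod n))"

definition polygon :: "(nat \<Rightarrow> real^2) \<Rightarrow> nat \<Rightarrow> (real^2) set" where
  "polygon p n = (\<Union>i<n. poly_edge p n i)"

definition adjacent_idx :: "nat \<Rightarrow> nat \<Rightarrow> nat \<Rightarrow> bool" where
  "adjacent_idx n i j \<longleftrightarrow> j = Suc i mod n \<or> i = Suc j mod n"

definition simple_closed_polygon :: "(nat \<Rightarrow> real^2) \<Rightarrow> nat \<Rightarrow> bool" where
  "simple_closed_polygon p n \<longleftrightarrow> n \<ge> 3 \<and> inj_on p {..<n} \<and>
     (\<forall>i<n. \<forall>j<n. i \<noteq> j \<longrightarrow>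
        poly_edge p n i \<inter> poly_edge p n j \<subseteq>
          (if j = Suc i mod n then {p j} else {}) \<union> (if i = Suc j mod n then {p i} else {}))"

definition ray :: "real^2 \<Rightarrow> real^2 \<Rightarrow> (real^2) set" where
  "ray a w = {a + l *\<^sub>R w | l. l \<ge> 0}"

end

theory Submission
  imports Defs
begin

text \<open>Choose a direction \<open>d\<close> such that no vertex lies on the line through \<open>a\<close> in direction
  \<open>d\<close>. The ray from \<open>a\<close> in direction \<open>d\<close> first meets \<open>P\<close> in the interior of an edge
  \<open>[u, w]\<close>, at a point \<open>x\<close> seen from \<open>a\<close>. Rotating the ray from \<open>x\<close> towards \<open>w\<close>, the
  first (and then nearest) vertex met inside the triangle \<open>a x w\<close> is seen from \<open>a\<close>; likewise
  towards \<open>u\<close>. These two visible vertices span an angle smaller than \<open>\<pi>\<close> that contains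
  \<open>d\<close>. The same construction for \<open>-d\<close> yields a visible pair whose angle contains \<open>-d\<close>, so
  \<open>a\<close> sees at least three distinct vertices; but no three vertices of an \<open>n\<close>-gon with
  \<open>n \<ge> 4\<close> are pairwise adjacent.\<close>

section \<open>Determinants in the plane\<close>

definition det2 :: "real^2 \<Rightarrow> real^2 \<Rightarrow> real" where
  "det2 u v = u$1 * v$2 - u$2 * v$1"

lemma det2_simps [simp]:
  "det2 u u = 0"
  "det2 0 u = 0"
  "det2 u 0 = 0"
  "det2 (u + v) w = det2 u w + det2 v w"
  "det2 w (u + v) = det2 w u + det2 w v"
  "det2 (c *\<^sub>R u) w = c * det2 u w"
  "det2 w (c *\<^sub>R u) = c * det2 w u"
  "det2 (- u) w = - det2 u w"
  "det2 w (- u) = - det2 w u"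
  by (simp_all add: det2_def algebra_simps)

lemma det2_swap: "det2 u v = - det2 v u"
  by (simp add: det2_def)

lemma det2_decompose:
  assumes "det2 X W \<noteq> 0"
  shows "Q = (det2 Q W / det2 X W) *\<^sub>R X + (det2 X Q / det2 X W) *\<^sub>R W"
proof -
  have e: "det2 X W *\<^sub>R Q = det2 Q W *\<^sub>R X + det2 X Q *\<^sub>R W"
    unfolding det2_def by (simp add: vec_eq_iff forall_2 algebra_simps)
  have "Q = (1 / det2 X W) *\<^sub>R (det2 X W *\<^sub>R Q)"
    using assms by simp
  also have "\<dots> = (det2 Q W / det2 X W) *\<^sub>R X + (det2 X Q / det2 X W) *\<^sub>R W"
    unfolding e by (simp add: scaleR_add_right)
  finally show ?thesis .
qed

lemma exists_direction_off_lines: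
  assumes "finite F" "0 \<notin> F"
  shows "\<exists>d. d \<noteq> 0 \<and> (\<forall>q\<in>F. det2 d q \<noteq> 0)"
proof -
  obtain c :: real where c: "c \<notin> (\<lambda>q. q$2 / q$1) ` F"
    using ex_new_if_finite[OF infinite_UNIV_char_0] finite_imageI[OF assms(1)] by blast
  define d :: "real^2" where "d = vector [1, c]"
  have "det2 d q \<noteq> 0" if "q \<in> F" for q
  proof
    assume "det2 d q = 0"
    then have q2: "q$2 = c * q$1"
      unfolding det2_def d_def by simp
    have "q \<noteq> 0"
      using assms(2) that by auto
    then have "q$1 \<noteq> 0"
      using q2 by (auto simp: vec_eq_iff forall_2)
    then have "c = q$2 / q$1"
      using q2 by simp
    then show False
      using c that by blast
  qed
  moreover have "d \<noteq> 0"
    unfolding d_def by (metis vector_2(1) zero_index zero_neq_one)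
  ultimately show ?thesis
    by blast
qed

text \<open>\<open>straddles d V1 V2\<close>: \<open>d\<close> points strictly inside the angle, smaller than \<open>\<pi>\<close>,
  swept counterclockwise from \<open>V2\<close> to \<open>V1\<close>.\<close>

definition straddles :: "real^2 \<Rightarrow> real^2 \<Rightarrow> real^2 \<Rightarrow> bool" where
  "straddles d V1 V2 \<longleftrightarrow> det2 d V1 * det2 V2 V1 > 0 \<and> det2 d V1 * det2 d V2 < 0"

lemma straddles_scaleR:
  assumes "straddles (l *\<^sub>R d) V1 V2" "l > 0"
  shows "straddles d V1 V2"
  using assms unfolding straddles_def
  by (auto simp: zero_less_mult_iff mult_less_0_iff)

lemma straddles_distinct: "straddles d V1 V2 \<Longrightarrow> V1 \<noteq> V2"
  unfolding straddles_def by (metis not_square_less_zero)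

lemma straddles_opposite_directions:
  assumes d: "straddles d V1 V2" and minus_d: "straddles (- d) V3 V4"
    and "V3 \<in> {V1, V2}" "V4 \<in> {V1, V2}"
  shows False
proof -
  consider "V3 = V1" "V4 = V2" | "V3 = V2" "V4 = V1"
    using straddles_distinct[OF minus_d] assms(3,4) by auto
  then show False
  proof cases
    case 1
    then show False
      using d minus_d unfolding straddles_def by simp
  next
    case 2
    then have "det2 d V2 * det2 V2 V1 > 0"
      using minus_d unfolding straddles_def by (simp add: det2_swap[of V1 V2])
    with d have "(det2 d V1 * det2 d V2) * (det2 V2 V1)\<^sup>2 > 0"
      unfolding straddles_def power2_eq_square
      by (metis mult.assoc mult.left_commute zero_less_mult_iff)
    moreover have "(det2 d V1 * det2 d V2) * (det2 V2 V1)\<^sup>2 \<le> 0"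
      using d unfolding straddles_def by (simp add: mult_nonpos_nonneg)
    ultimately show False
      by simp
  qed
qed

lemma straddles_cone_points:
  fixes U W X V1 V2 :: "real^2"
  assumes X: "X = (1 - t) *\<^sub>R U + t *\<^sub>R W" and t: "0 < t" "t < 1"
    and XW: "det2 X W \<noteq> 0"
    and V1: "V1 = \<alpha>1 *\<^sub>R X + \<beta>1 *\<^sub>R W" "\<alpha>1 \<ge> 0" "\<beta>1 > 0"
    and V2: "V2 = \<alpha>2 *\<^sub>R X + \<beta>2 *\<^sub>R U" "\<alpha>2 \<ge> 0" "\<beta>2 > 0"
  shows "straddles X V1 V2"
proof -
  define D where "D = det2 U W"
  define K where "K = \<alpha>2 * \<beta>1 * (1 - t) + \<beta>2 * \<alpha>1 * t + \<beta>2 * \<beta>1"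
  have XW_D: "det2 X W = (1 - t) * D" and UX_D: "det2 U X = t * D"
    unfolding X D_def by simp_all
  have "det2 X ((1 - t) *\<^sub>R U + t *\<^sub>R W) = 0"
    by (simp only: X[symmetric] det2_simps(1))
  then have XU: "(1 - t) * det2 X U = - t * det2 X W"
    by simp
  have V1_det: "det2 X V1 = \<beta>1 * det2 X W" and V2_det: "det2 X V2 = \<beta>2 * det2 X U"
    unfolding V1(1) V2(1) by simp_all
  have "det2 V2 V1 = \<alpha>2 * \<beta>1 * det2 X W + \<beta>2 * \<alpha>1 * det2 U X + \<beta>2 * \<beta>1 * D"
    unfolding V1(1) V2(1) D_def by (simp add: algebra_simps)
  then have V21: "det2 V2 V1 = K * D"
    unfolding XW_D UX_D K_def by (simp add: algebra_simps)
  have "K > 0"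
    unfolding K_def using t V1 V2
    by (intro add_nonneg_pos add_nonneg_nonneg mult_nonneg_nonneg mult_pos_pos) auto
  moreover have "D \<noteq> 0"
    using XW XW_D by auto
  ultimately have "\<beta>1 * (1 - t) * K * D\<^sup>2 > 0"
    using V1 t by simp
  moreover have "det2 X V1 * det2 V2 V1 = \<beta>1 * (1 - t) * K * D\<^sup>2"
    unfolding V1_det V21 XW_D by (simp add: power2_eq_square)
  moreover have "(1 - t) * (det2 X V1 * det2 X V2) < 0"
  proof -
    have "(1 - t) * (det2 X V1 * det2 X V2) = \<beta>1 * \<beta>2 * det2 X W * ((1 - t) * det2 X U)"
      unfolding V1_det V2_det by (simp add: algebra_simps)
    also have "\<dots> = - (t * \<beta>1 * \<beta>2 * (det2 X W)\<^sup>2)"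
      unfolding XU by (simp add: power2_eq_square algebra_simps)
    finally show ?thesis
      using t V1 V2 XW by simp
  qed
  ultimately show ?thesis
    unfolding straddles_def using t by (simp add: mult_less_0_iff)
qed

section \<open>Rays and polygons\<close>

lemma ray_first_hit:
  assumes "closed S" "a \<notin> S" "ray a d \<inter> S \<noteq> {}"
  shows "\<exists>l>0. a + l *\<^sub>R d \<in> S \<and> open_segment a (a + l *\<^sub>R d) \<inter> S = {}"
proof -
  define L where "L = {l. 0 \<le> l \<and> a + l *\<^sub>R d \<in> S}"
  have "closed L"
  proof -
    have "L = {0..} \<inter> (\<lambda>l. a + l *\<^sub>R d) -` S"
      unfolding L_def by auto
    then show ?thesis
      using assms(1) by (auto intro!: closed_Int continuous_closed_vimage continuous_intros)
  qed
  moreover have "L \<noteq> {}"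
    using assms(3) unfolding L_def ray_def by auto
  moreover have L_bdd: "bdd_below L"
    unfolding L_def by (rule bdd_belowI[of _ 0]) auto
  ultimately have "Inf L \<in> L"
    using closed_contains_Inf by blast
  moreover have "Inf L \<noteq> 0"
    using calculation assms(2) unfolding L_def by auto
  ultimately have l0: "Inf L > 0" "a + Inf L *\<^sub>R d \<in> S"
    unfolding L_def by auto
  have "open_segment a (a + Inf L *\<^sub>R d) \<inter> S = {}"
  proof (rule ccontr)
    assume "open_segment a (a + Inf L *\<^sub>R d) \<inter> S \<noteq> {}"
    then obtain z where "z \<in> open_segment a (a + Inf L *\<^sub>R d)" "z \<in> S"
      by blast
    then obtain s where s: "0 < s" "s < 1" "(1 - s) *\<^sub>R a + s *\<^sub>R (a + Inf L *\<^sub>R d) \<in> S"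
      unfolding in_segment by auto
    then have "s * Inf L \<in> L"
      using l0 unfolding L_def by (simp add: algebra_simps)
    then have "Inf L \<le> s * Inf L"
      using L_bdd by (rule cInf_lower)
    then show False
      using s l0 by (simp add: mult_le_cancel_right2)
  qed
  then show ?thesis
    using l0 by blast
qed

lemma segment_exits_region:
  fixes b0 b1 c0 c1 :: real
  assumes "b0 > 0" "c0 < 1" "\<not> (b1 \<ge> 0 \<and> c1 \<le> 1)"
  shows "\<exists>s. 0 < s \<and> s \<le> 1 \<and> (1 - s) * b0 + s * b1 \<ge> 0 \<and> (1 - s) * c0 + s * c1 \<le> 1 \<and>
     ((1 - s) * b0 + s * b1 = 0 \<or> (1 - s) * c0 + s * c1 = 1)"
proof -
  define h where "h s = min ((1 - s) * b0 + s * b1) (1 - ((1 - s) * c0 + s * c1))" for s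
  have "continuous_on {0..1} h"
    unfolding h_def by (intro continuous_intros)
  moreover have "h 1 \<le> 0" "0 \<le> h 0"
    using assms unfolding h_def by auto
  ultimately obtain s where s: "0 \<le> s" "s \<le> 1" "h s = 0"
    using IVT2'[of h 1 0 0] by auto
  moreover have "s \<noteq> 0"
    using s(3) assms unfolding h_def by auto
  ultimately show ?thesis
    unfolding h_def by (intro exI[of _ s]) (auto simp: min_def split: if_splits)
qed

lemma poly_edge_subset_polygon: "i < n \<Longrightarrow> poly_edge p n i \<subseteq> polygon p n"
  unfolding polygon_def by auto

lemma vertex_in_polygon: "i < n \<Longrightarrow> p i \<in> polygon p n"
  using poly_edge_subset_polygon[of i n p] unfolding poly_edge_def by auto

lemma closed_polygon: "closed (polygon p n)"
  unfolding polygon_def poly_edge_def by (intro closed_UN) auto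

lemma exists_direction_off_vertices:
  assumes "a \<notin> polygon p n"
  shows "\<exists>d. d \<noteq> 0 \<and> (\<forall>i<n. det2 d (p i - a) \<noteq> 0)"
proof -
  have "0 \<notin> (\<lambda>i. p i - a) ` {..<n}"
  proof
    assume "0 \<in> (\<lambda>i. p i - a) ` {..<n}"
    then obtain i where "i < n" "p i = a"
      by (auto simp: eq_commute[of 0])
    then show False
      using vertex_in_polygon assms by metis
  qed
  then show ?thesis
    using exists_direction_off_lines[of "(\<lambda>i. p i - a) ` {..<n}"] by auto
qed

lemma simple_polygon_edges_meet_in_vertex:
  assumes "simple_closed_polygon p n" "i < n" "m < n" "i \<noteq> m"
    "q \<in> poly_edge p n i" "q \<in> poly_edge p n m"
  shows "q \<in> p ` {..<n}"
proof -
  have "q \<in> (if m = Suc i mod n then {p m} else {}) \<union> (if i = Suc m mod n then {p i} else {})"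
    using assms unfolding simple_closed_polygon_def by blast
  then show ?thesis
    using assms(2,3) by (auto split: if_splits)
qed

lemma adjacent_idx_triangle_free:
  assumes "n \<ge> 4" "i < n" "j < n" "k < n" "i \<noteq> j" "j \<noteq> k" "i \<noteq> k"
    "adjacent_idx n i j" "adjacent_idx n j k" "adjacent_idx n i k"
  shows False
proof -
  have succ: "(Suc x mod n = Suc x \<and> Suc x < n) \<or> (Suc x mod n = 0 \<and> Suc x = n)" if "x < n" for x
    using that by (metis Suc_lessI mod_less mod_self)
  show False
    using succ[OF assms(2)] succ[OF assms(3)] succ[OF assms(4)] assms
    unfolding adjacent_idx_def by linarith
qed

section \<open>A visible vertex next to a visible edge point\<close>

locale edge_sweep =
  fixes p :: "nat \<Rightarrow> real^2" and n k :: nat and a x u w :: "real^2"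
  assumes simple: "simple_closed_polygon p n"
    and k_less: "k < n"
    and edge_ends: "{u, w} = {p k, p (Suc k mod n)}"
    and x_on_edge: "x \<in> poly_edge p n k"
    and a_outside: "a \<notin> polygon p n"
    and x_visible: "open_segment a x \<inter> polygon p n = {}"
    and no_vertex_on_line: "\<forall>i<n. det2 (x - a) (p i - a) \<noteq> 0"
begin

abbreviation vertices :: "(real^2) set" where
  "vertices \<equiv> p ` {..<n}"

lemma edge_k_eq: "poly_edge p n k = closed_segment u w"
  using edge_ends unfolding poly_edge_def by (auto simp: doubleton_eq_iff closed_segment_commute)

lemma edge_ends_vertices: "u \<in> vertices" "w \<in> vertices"
  using edge_ends k_less by (auto simp: doubleton_eq_iff)

lemma vertex_off_line: "q \<in> vertices \<Longrightarrow> det2 (x - a) (q - a) \<noteq> 0"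
  using no_vertex_on_line by auto

lemma x_not_vertex: "x \<notin> vertices"
  using vertex_off_line[of x] by auto

lemma x_between: "\<exists>t. 0 < t \<and> t < 1 \<and> x = (1 - t) *\<^sub>R u + t *\<^sub>R w"
proof -
  have "x \<noteq> u" "x \<noteq> w"
    using x_not_vertex edge_ends_vertices by auto
  then have "x \<in> open_segment u w"
    using x_on_edge edge_k_eq unfolding open_segment_def by auto
  then show ?thesis
    unfolding in_segment by auto
qed

lemma det2_x_w: "det2 (x - a) (w - a) \<noteq> 0"
  using vertex_off_line edge_ends_vertices by auto

text \<open>\<open>(coord_x q, coord_w q)\<close> are the coordinates of \<open>q - a\<close> in the basis
  \<open>x - a\<close>, \<open>w - a\<close>: the closed triangle \<open>a x w\<close> is described by
  \<open>coord_x \<ge> 0\<close>, \<open>coord_w \<ge> 0\<close>, \<open>level \<le> 1\<close>, and edge \<open>k\<close> lies on the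
  line \<open>level = 1\<close>.\<close>

definition coord_x :: "real^2 \<Rightarrow> real" where
  "coord_x q = det2 (q - a) (w - a) / det2 (x - a) (w - a)"

definition coord_w :: "real^2 \<Rightarrow> real" where
  "coord_w q = det2 (x - a) (q - a) / det2 (x - a) (w - a)"

definition level :: "real^2 \<Rightarrow> real" where
  "level q = coord_x q + coord_w q"

lemma coords_point: "a + coord_x q *\<^sub>R (x - a) + coord_w q *\<^sub>R (w - a) = q"
proof -
  have "q - a = coord_x q *\<^sub>R (x - a) + coord_w q *\<^sub>R (w - a)"
    unfolding coord_x_def coord_w_def by (rule det2_decompose[OF det2_x_w])
  then show ?thesis
    by (simp add: algebra_simps)
qed

lemma coords_convex_combination:
  "coord_x ((1 - s) *\<^sub>R q1 + s *\<^sub>R q2) = (1 - s) * coord_x q1 + s * coord_x q2"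
  "coord_w ((1 - s) *\<^sub>R q1 + s *\<^sub>R q2) = (1 - s) * coord_w q1 + s * coord_w q2"
  "level ((1 - s) *\<^sub>R q1 + s *\<^sub>R q2) = (1 - s) * level q1 + s * level q2"
proof -
  have q: "(1 - s) *\<^sub>R q1 + s *\<^sub>R q2 - a = (1 - s) *\<^sub>R (q1 - a) + s *\<^sub>R (q2 - a)"
    by (simp add: algebra_simps)
  show "coord_x ((1 - s) *\<^sub>R q1 + s *\<^sub>R q2) = (1 - s) * coord_x q1 + s * coord_x q2"
    "coord_w ((1 - s) *\<^sub>R q1 + s *\<^sub>R q2) = (1 - s) * coord_w q1 + s * coord_w q2"
    unfolding coord_x_def coord_w_def q by (simp_all add: add_divide_distrib)
  then show "level ((1 - s) *\<^sub>R q1 + s *\<^sub>R q2) = (1 - s) * level q1 + s * level q2"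
    unfolding level_def by (simp add: algebra_simps)
qed

lemma coords_simps [simp]:
  "coord_x a = 0" "coord_w a = 0" "coord_x x = 1" "coord_w x = 0" "coord_x w = 0" "coord_w w = 1"
  using det2_x_w by (simp_all add: coord_x_def coord_w_def)

lemma level_simps [simp]: "level a = 0" "level x = 1" "level w = 1"
  by (simp_all add: level_def)

lemma level_edge_k: "q \<in> poly_edge p n k \<Longrightarrow> level q = 1"
proof -
  obtain t where t: "0 < t" "t < 1" "x = (1 - t) *\<^sub>R u + t *\<^sub>R w"
    using x_between by blast
  then have "1 = (1 - t) * level u + t"
    using coords_convex_combination(3)[of t u w] by (simp add: level_def t(3)[symmetric])
  then have "(1 - t) * (level u - 1) = 0"
    by (simp add: algebra_simps)
  then have level_u: "level u = 1"
    using t(2) by simp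
  assume "q \<in> poly_edge p n k"
  then obtain s where "q = (1 - s) *\<^sub>R u + s *\<^sub>R w"
    unfolding edge_k_eq in_segment by auto
  then show "level q = 1"
    using level_u by (simp add: coords_convex_combination(3))
qed

lemma coord_w_vertex: "q \<in> vertices \<Longrightarrow> coord_w q \<noteq> 0"
  unfolding coord_w_def using vertex_off_line det2_x_w by simp

lemma a_ne_x: "a \<noteq> x"
  using a_outside x_on_edge poly_edge_subset_polygon[OF k_less] by blast

lemma side_ax_meets_no_other_edge:
  assumes "m < n" "m \<noteq> k" "q \<in> poly_edge p n m" "coord_w q = 0" "0 < coord_x q" "coord_x q \<le> 1"
  shows False
proof -
  obtain c where c: "coord_x q = c"
    by simp
  have "q = a + c *\<^sub>R (x - a)"
    using coords_point[of q] assms(4) c by simp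
  then have q: "q = (1 - c) *\<^sub>R a + c *\<^sub>R x"
    by (simp add: algebra_simps)
  show False
  proof (cases "c = 1")
    case True
    then show False
      using simple_polygon_edges_meet_in_vertex[OF simple k_less assms(1) assms(2)[symmetric]
          x_on_edge] assms(3) x_not_vertex q by simp
  next
    case False
    then have "q \<in> open_segment a x"
      using a_ne_x assms(5,6) c unfolding in_segment q by auto
    then show False
      using x_visible poly_edge_subset_polygon[OF assms(1)] assms(3) by blast
  qed
qed

lemma side_xw_meets_other_edge_in_vertex:
  assumes "m < n" "m \<noteq> k" "q \<in> poly_edge p n m"
    "coord_x q \<ge> 0" "coord_w q \<ge> 0" "level q = 1"
  shows "q \<in> vertices"
proof -
  obtain c where c: "coord_w q = c"
    by simp
  then have cx: "coord_x q = 1 - c"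
    using assms(6) unfolding level_def by simp
  then have "q = a + (1 - c) *\<^sub>R (x - a) + c *\<^sub>R (w - a)"
    using coords_point[of q] c by simp
  then have "q = (1 - c) *\<^sub>R x + c *\<^sub>R w"
    by (simp add: algebra_simps)
  moreover have "0 \<le> c" "c \<le> 1"
    using assms(4,5) c cx by simp_all
  ultimately have "q \<in> closed_segment x w"
    unfolding in_segment by blast
  moreover have "closed_segment x w \<subseteq> poly_edge p n k"
    using x_on_edge edge_k_eq by (simp add: subset_closed_segment)
  ultimately show ?thesis
    using simple_polygon_edges_meet_in_vertex[OF simple k_less assms(1) assms(2)[symmetric] _ assms(3)]
    by blast
qed

definition triangle_vertices :: "(real^2) set" where
  "triangle_vertices = {q \<in> vertices. coord_x q \<ge> 0 \<and> coord_w q \<ge> 0 \<and> level q \<le> 1}"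

lemma triangle_vertex_pos: "q \<in> triangle_vertices \<Longrightarrow> coord_w q > 0 \<and> level q > 0"
  using coord_w_vertex unfolding triangle_vertices_def level_def by force

text \<open>The direction of \<open>q - a\<close>, from \<open>0\<close> along \<open>x - a\<close> to \<open>1\<close> along
  \<open>w - a\<close>.\<close>

definition sweep :: "real^2 \<Rightarrow> real" where
  "sweep q = coord_w q / level q"

definition first_vertex :: "real^2 \<Rightarrow> bool" where
  "first_vertex v \<longleftrightarrow> v \<in> triangle_vertices \<and>
     (\<forall>q\<in>triangle_vertices. sweep v \<le> sweep q \<and> (sweep q = sweep v \<longrightarrow> level v \<le> level q))"

lemma first_vertex_exists: "\<exists>v. first_vertex v"
proof -
  have fin: "finite triangle_vertices"
    unfolding triangle_vertices_def by simp
  have "w \<in> triangle_vertices"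
    using edge_ends_vertices unfolding triangle_vertices_def by simp
  then have "Min (sweep ` triangle_vertices) \<in> sweep ` triangle_vertices"
    using fin by (intro Min_in) auto
  then obtain v0 where v0: "v0 \<in> triangle_vertices" "sweep v0 = Min (sweep ` triangle_vertices)"
    by (metis imageE)
  then have v0_min: "\<forall>q\<in>triangle_vertices. sweep v0 \<le> sweep q"
    using fin by simp
  define T where "T = {q \<in> triangle_vertices. sweep q = sweep v0}"
  have fin_T: "finite T"
    using fin unfolding T_def by simp
  have "Min (level ` T) \<in> level ` T"
    using fin_T v0(1) unfolding T_def by (intro Min_in) auto
  then obtain v where v: "v \<in> T" "level v = Min (level ` T)"
    by (metis imageE)
  then have "\<forall>q\<in>T. level v \<le> level q"
    using fin_T by simp
  then have "first_vertex v"
    using v(1) v0_min unfolding first_vertex_def T_def by auto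
  then show ?thesis ..
qed

end

locale first_vertex_sweep = edge_sweep +
  fixes v :: "real^2"
  assumes first: "first_vertex v"
begin

text \<open>\<open>turn q < 0\<close> means that \<open>q - a\<close> comes strictly before \<open>v - a\<close> when sweeping from
  \<open>x - a\<close> towards \<open>w - a\<close>; \<open>turn q = 0\<close> means that \<open>q\<close> lies on the line \<open>a v\<close>.\<close>

definition turn :: "real^2 \<Rightarrow> real" where
  "turn q = coord_w q * level v - coord_w v * level q"

lemma first_vertex_props:
  "v \<in> vertices" "coord_x v \<ge> 0" "coord_w v > 0" "level v > 0" "level v \<le> 1"
  using first triangle_vertex_pos unfolding first_vertex_def triangle_vertices_def by auto

lemma turn_convex_combination:
  "turn ((1 - s) *\<^sub>R q1 + s *\<^sub>R q2) = (1 - s) * turn q1 + s * turn q2"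
  unfolding turn_def coords_convex_combination by (simp add: algebra_simps)

lemma turn_simps [simp]: "turn a = 0" "turn v = 0"
  unfolding turn_def by simp_all

lemma turn_neg_coord_x_pos:
  assumes "turn q < 0" "coord_w q \<ge> 0"
  shows "coord_x q > 0"
proof -
  have "coord_w q * coord_x v < coord_w v * coord_x q"
    using assms(1) unfolding turn_def level_def by (simp add: algebra_simps)
  moreover have "coord_w q * coord_x v \<ge> 0"
    using assms(2) first_vertex_props(2) by simp
  ultimately have "coord_w v * coord_x q > 0"
    by linarith
  then show ?thesis
    using first_vertex_props(3) by (simp add: zero_less_mult_iff)
qed

lemma vertex_not_before:
  assumes "q \<in> vertices" "coord_w q \<ge> 0" "level q \<le> 1"
  shows "turn q \<ge> 0"
proof (rule ccontr)
  assume "\<not> turn q \<ge> 0"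
  then have neg: "turn q < 0"
    by simp
  then have "q \<in> triangle_vertices"
    using turn_neg_coord_x_pos assms unfolding triangle_vertices_def by fastforce
  moreover from this have "sweep q < sweep v"
    using neg triangle_vertex_pos first_vertex_props(4) unfolding turn_def sweep_def
    by (simp add: field_simps)
  ultimately show False
    using first unfolding first_vertex_def by force
qed

lemma vertex_not_closer:
  assumes "q \<in> vertices" "turn q = 0" "0 < level q"
  shows "level v \<le> level q"
proof (rule ccontr)
  assume "\<not> level v \<le> level q"
  then have closer: "level q < level v"
    by simp
  have same_line: "coord_w q * level v = coord_w v * level q"
    using assms(2) unfolding turn_def by simp
  then have "coord_x q * level v = level q * coord_x v"
    unfolding level_def by (simp add: algebra_simps)
  then have "coord_x q * level v \<ge> 0"
    using first_vertex_props(2) assms(3) by simp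
  then have "coord_x q \<ge> 0"
    using first_vertex_props(4) by (simp add: zero_le_mult_iff)
  moreover have "coord_w q * level v > 0"
    using same_line first_vertex_props(3) assms(3) by simp
  then have "coord_w q > 0"
    using first_vertex_props(4) by (simp add: zero_less_mult_iff)
  ultimately have "q \<in> triangle_vertices"
    using assms(1) closer first_vertex_props(5) unfolding triangle_vertices_def by auto
  moreover have "sweep q = sweep v"
    using same_line assms(3) first_vertex_props(4) unfolding sweep_def by (simp add: field_simps)
  ultimately show False
    using first closer unfolding first_vertex_def by force
qed

lemma turn_level_zero_point:
  assumes "turn q = 0" "level q = 0"
  shows "q = a"
proof -
  have "coord_w q = 0"
    using assms first_vertex_props(4) unfolding turn_def by simp
  moreover from this have "coord_x q = 0"
    using assms(2) unfolding level_def by simp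
  ultimately show ?thesis
    using coords_point[of q] by simp
qed

lemma collinear_edge_not_blocking:
  assumes "e1 \<in> vertices" "e2 \<in> vertices" "closed_segment e1 e2 \<subseteq> polygon p n"
    "z \<in> closed_segment e1 e2" "turn e1 = 0" "turn e2 = 0" "0 < level z" "level z < level v"
  shows False
proof -
  obtain r where r: "0 \<le> r" "r \<le> 1" "z = (1 - r) *\<^sub>R e1 + r *\<^sub>R e2"
    using assms(4) unfolding in_segment by auto
  have "(1 - r) * min (level e1) (level e2) + r * min (level e1) (level e2)
      \<le> (1 - r) * level e1 + r * level e2"
    using r by (intro add_mono mult_left_mono) auto
  also have "\<dots> = level z"
    unfolding r(3) by (rule coords_convex_combination(3)[symmetric])
  finally have "min (level e1) (level e2) \<le> level z"
    by (simp add: algebra_simps)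
  then obtain e where e: "e \<in> {e1, e2}" "level e \<le> level z"
    by (metis insertCI min_def)
  have turn_z: "turn z = 0"
    using r(3) assms(5,6) by (simp add: turn_convex_combination)
  have e_vertex: "e \<in> vertices" "turn e = 0"
    using e(1) assms(1,2,5,6) by auto
  show False
  proof (cases "level e > 0")
    case True
    then show False
      using vertex_not_closer[OF e_vertex] e(2) assms(8) by simp
  next
    case False
    define s where "s = level z / (level z - level e)"
    have s: "0 < s" "s \<le> 1"
      using False assms(7) unfolding s_def by (auto simp: divide_simps)
    define q where "q = (1 - s) *\<^sub>R z + s *\<^sub>R e"
    have "level q = 0"
      using False assms(7) unfolding q_def s_def coords_convex_combination by (simp add: field_simps)
    moreover have "turn q = 0"
      unfolding q_def turn_convex_combination using turn_z e_vertex(2) by simp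
    ultimately have "q = a"
      by (rule turn_level_zero_point[rotated])
    moreover have "q \<in> closed_segment z e"
      unfolding q_def in_segment using s by (intro exI[of _ s]) simp
    moreover have "closed_segment z e \<subseteq> closed_segment e1 e2"
      using assms(4) e(1) by (auto simp: subset_closed_segment)
    ultimately show False
      using assms(3) a_outside by auto
  qed
qed

lemma crossing_edge_not_blocking:
  assumes "m < n" "m \<noteq> k" "e \<in> vertices" "e \<in> poly_edge p n m" "z \<in> poly_edge p n m"
    "turn z = 0" "coord_w z > 0" "level z < 1" "turn e < 0"
  shows False
proof (cases "coord_w e \<ge> 0 \<and> level e \<le> 1")
  case True
  then show False
    using vertex_not_before[OF assms(3)] assms(9) by simp
next
  case False
  obtain s where s: "0 < s" "s \<le> 1"
    "(1 - s) * coord_w z + s * coord_w e \<ge> 0" "(1 - s) * level z + s * level e \<le> 1"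
    "(1 - s) * coord_w z + s * coord_w e = 0 \<or> (1 - s) * level z + s * level e = 1"
    using segment_exits_region[OF assms(7,8) False] by blast
  define q where "q = (1 - s) *\<^sub>R z + s *\<^sub>R e"
  have q_coords: "coord_w q \<ge> 0" "level q \<le> 1" "coord_w q = 0 \<or> level q = 1"
    using s(3-5) unfolding q_def coords_convex_combination by auto
  have turn_q: "turn q < 0"
    unfolding q_def turn_convex_combination using assms(6,9) s(1) by (simp add: mult_pos_neg)
  then have x_q: "coord_x q > 0"
    using turn_neg_coord_x_pos q_coords(1) by blast
  have "q \<in> closed_segment z e"
    unfolding q_def in_segment using s(1,2) by (intro exI[of _ s]) simp
  moreover have "closed_segment z e \<subseteq> poly_edge p n m"
    using assms(4,5) unfolding poly_edge_def by (simp add: subset_closed_segment)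
  ultimately have q_edge: "q \<in> poly_edge p n m"
    by blast
  from q_coords(3) show False
  proof
    assume "coord_w q = 0"
    then show False
      using side_ax_meets_no_other_edge[OF assms(1,2) q_edge] x_q q_coords(2)
      unfolding level_def by simp
  next
    assume "level q = 1"
    then have "q \<in> vertices"
      using side_xw_meets_other_edge_in_vertex[OF assms(1,2) q_edge] x_q q_coords(1) by simp
    then show False
      using vertex_not_before q_coords(1,2) turn_q by force
  qed
qed

lemma point_before_first_vertex:
  assumes "z \<in> open_segment a v"
  shows "turn z = 0" "coord_w z > 0" "0 < level z" "level z < level v"
proof -
  obtain \<rho> where \<rho>: "0 < \<rho>" "\<rho> < 1" "z = (1 - \<rho>) *\<^sub>R a + \<rho> *\<^sub>R v"
    using assms unfolding in_segment by auto
  show "turn z = 0"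
    unfolding \<rho>(3) turn_convex_combination by simp
  show "coord_w z > 0"
    unfolding \<rho>(3) coords_convex_combination using \<rho>(1) first_vertex_props(3) by simp
  have "level z = \<rho> * level v"
    unfolding \<rho>(3) coords_convex_combination by simp
  then show "0 < level z" "level z < level v"
    using \<rho>(1,2) first_vertex_props(4) by simp_all
qed

lemma turn_ends_of_segment:
  assumes "z \<in> open_segment e1 e2" "turn z = 0"
  obtains "turn e1 = 0" "turn e2 = 0" | e where "e \<in> {e1, e2}" "turn e < 0"
proof -
  obtain r where r: "0 < r" "r < 1" "z = (1 - r) *\<^sub>R e1 + r *\<^sub>R e2"
    using assms(1) unfolding in_segment by auto
  have turn_sum: "(1 - r) * turn e1 + r * turn e2 = 0"
    using assms(2) unfolding r(3) turn_convex_combination .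
  show ?thesis
  proof (cases "turn e1 < 0 \<or> turn e2 < 0")
    case True
    then show ?thesis
      using that(2) by blast
  next
    case False
    then have "(1 - r) * turn e1 = 0 \<and> r * turn e2 = 0"
      using turn_sum r(1,2) by (simp add: add_nonneg_eq_0_iff)
    then show ?thesis
      using that(1) r(1,2) by simp
  qed
qed

text \<open>A point \<open>z\<close> of \<open>P\<close> on \<open>]a, v[\<close> lies on an edge. If the edge lies on the line
  \<open>a v\<close>, one of its endpoints is a vertex nearer than \<open>v\<close>. Otherwise it has an endpoint swept
  before \<open>v\<close>; that endpoint is outside the triangle \<open>a x w\<close>, so the edge leaves the triangle
  through \<open>]a, x]\<close>, which \<open>a\<close> sees, or through \<open>[x, w]\<close>, which lies on edge \<open>k\<close> and
  hence meets other edges only in vertices.\<close>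

lemma first_vertex_visible: "open_segment a v \<inter> polygon p n = {}"
proof (rule ccontr)
  assume "open_segment a v \<inter> polygon p n \<noteq> {}"
  then obtain z where z: "z \<in> open_segment a v" "z \<in> polygon p n"
    by blast
  note z_props = point_before_first_vertex[OF z(1)]
  obtain m where m: "m < n" "z \<in> poly_edge p n m"
    using z(2) unfolding polygon_def by auto
  have "m \<noteq> k"
  proof
    assume "m = k"
    then have "level z = 1"
      using level_edge_k m(2) by simp
    then show False
      using z_props(4) first_vertex_props(5) by simp
  qed
  show False
  proof (cases "z \<in> vertices")
    case True
    then show False
      using vertex_not_closer[OF True z_props(1)] z_props(3,4) by simp
  next
    case False
    define e1 e2 where "e1 = p m" and "e2 = p (Suc m mod n)"
    have ends: "e1 \<in> vertices" "e2 \<in> vertices"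
      using m(1) unfolding e1_def e2_def by auto
    have edge: "poly_edge p n m = closed_segment e1 e2"
      unfolding poly_edge_def e1_def e2_def ..
    have "z \<noteq> e1" "z \<noteq> e2"
      using False ends by auto
    then have "z \<in> open_segment e1 e2"
      using m(2) unfolding edge open_segment_def by simp
    from turn_ends_of_segment[OF this z_props(1)] show False
    proof cases
      case 1
      then show False
        using collinear_edge_not_blocking[OF ends _ _ 1] edge m poly_edge_subset_polygon
          z_props(3,4) by blast
    next
      case (2 e)
      then show False
        using crossing_edge_not_blocking[OF m(1) \<open>m \<noteq> k\<close> _ _ m(2) z_props(1,2) _ 2(2)]
          ends edge z_props(4) first_vertex_props(5) by auto
    qed
  qed
qed

end

lemma (in edge_sweep) visible_vertex_in_cone:
  "\<exists>j<n. open_segment a (p j) \<inter> polygon p n = {} \<and>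
     (\<exists>\<alpha> \<beta>. \<alpha> \<ge> 0 \<and> \<beta> > 0 \<and> p j - a = \<alpha> *\<^sub>R (x - a) + \<beta> *\<^sub>R (w - a))"
proof -
  obtain v where "first_vertex v"
    using first_vertex_exists ..
  then interpret first_vertex_sweep p n k a x u w v
    by unfold_locales
  obtain j where j: "j < n" "v = p j"
    using first_vertex_props(1) by auto
  have "v - a = coord_x v *\<^sub>R (x - a) + coord_w v *\<^sub>R (w - a)"
    using coords_point[of v] by (simp add: algebra_simps)
  then show ?thesis
    using j first_vertex_visible first_vertex_props(2,3) by blast
qed

lemma visible_pair_straddling:
  assumes simple: "simple_closed_polygon p n" and a_outside: "a \<notin> polygon p n"
    and off_line: "\<forall>i<n. det2 d (p i - a) \<noteq> 0"
    and hit: "ray a d \<inter> polygon p n \<noteq> {}"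
  shows "\<exists>j1<n. \<exists>j2<n. open_segment a (p j1) \<inter> polygon p n = {} \<and>
           open_segment a (p j2) \<inter> polygon p n = {} \<and> straddles d (p j1 - a) (p j2 - a)"
proof -
  obtain l where l: "l > 0" "a + l *\<^sub>R d \<in> polygon p n"
      "open_segment a (a + l *\<^sub>R d) \<inter> polygon p n = {}"
    using ray_first_hit[OF closed_polygon a_outside hit] by blast
  define x where "x = a + l *\<^sub>R d"
  obtain k where k: "k < n" "x \<in> poly_edge p n k"
    using l(2) unfolding x_def polygon_def by auto
  define u w where "u = p k" and "w = p (Suc k mod n)"
  have "\<forall>i<n. det2 (x - a) (p i - a) \<noteq> 0"
    using off_line l(1) unfolding x_def by simp
  then have sweep_w: "edge_sweep p n k a x u w" and sweep_u: "edge_sweep p n k a x w u"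
    using simple k a_outside l(3)[folded x_def] unfolding edge_sweep_def u_def w_def
    by (simp_all add: insert_commute)
  obtain j1 \<alpha>1 \<beta>1 where j1: "j1 < n" "open_segment a (p j1) \<inter> polygon p n = {}"
      "\<alpha>1 \<ge> 0" "\<beta>1 > 0" "p j1 - a = \<alpha>1 *\<^sub>R (x - a) + \<beta>1 *\<^sub>R (w - a)"
    using edge_sweep.visible_vertex_in_cone[OF sweep_w] by blast
  obtain j2 \<alpha>2 \<beta>2 where j2: "j2 < n" "open_segment a (p j2) \<inter> polygon p n = {}"
      "\<alpha>2 \<ge> 0" "\<beta>2 > 0" "p j2 - a = \<alpha>2 *\<^sub>R (x - a) + \<beta>2 *\<^sub>R (u - a)"
    using edge_sweep.visible_vertex_in_cone[OF sweep_u] by blast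
  obtain t where t: "0 < t" "t < 1" "x = (1 - t) *\<^sub>R u + t *\<^sub>R w"
    using edge_sweep.x_between[OF sweep_w] by blast
  have "x - a = (1 - t) *\<^sub>R (u - a) + t *\<^sub>R (w - a)"
    using t(3) by (simp add: algebra_simps)
  then have "straddles (x - a) (p j1 - a) (p j2 - a)"
    using straddles_cone_points[OF _ t(1,2) edge_sweep.det2_x_w[OF sweep_w] j1(5,3,4) j2(5,3,4)]
    by blast
  then have "straddles d (p j1 - a) (p j2 - a)"
    using straddles_scaleR l(1) unfolding x_def by simp
  then show ?thesis
    using j1(1,2) j2(1,2) by blast
qed

lemma pairwise_adjacent_at_most_two:
  assumes "n \<ge> 4" "S \<subseteq> {..<n}" "\<forall>i\<in>S. \<forall>j\<in>S. p i \<noteq> p j \<longrightarrow> adjacent_idx n i j"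
    "j1 \<in> S" "j2 \<in> S" "p j1 \<noteq> p j2" "i \<in> S"
  shows "p i \<in> {p j1, p j2}"
proof (rule ccontr)
  assume "p i \<notin> {p j1, p j2}"
  then have "p j1 \<noteq> p i" "p j2 \<noteq> p i"
    by auto
  then have "adjacent_idx n j1 j2" "adjacent_idx n j2 i" "adjacent_idx n j1 i"
    using assms(3-7) by blast+
  moreover have "j1 < n" "j2 < n" "i < n"
    using assms(2,4,5,7) by auto
  moreover have "j1 \<noteq> j2" "j2 \<noteq> i" "j1 \<noteq> i"
    using assms(6) \<open>p j1 \<noteq> p i\<close> \<open>p j2 \<noteq> p i\<close> by auto
  ultimately show False
    using adjacent_idx_triangle_free[OF assms(1)] by blast
qed

theorem lemma4p2:
  fixes p :: "nat \<Rightarrow> real^2" and n :: nat and a :: "real^2"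
  assumes "simple_closed_polygon p n"
    and "n \<ge> 4"
    and "a \<notin> polygon p n"
    and "\<forall>w. w \<noteq> 0 \<longrightarrow> ray a w \<inter> polygon p n \<noteq> {}"
  shows "\<exists>i<n. \<exists>j<n. p i \<noteq> p j \<and> \<not> adjacent_idx n i j \<and>
           open_segment a (p i) \<subseteq> UNIV - polygon p n \<and>
           open_segment a (p j) \<subseteq> UNIV - polygon p n"
proof (rule ccontr)
  assume no_pair: "\<not> ?thesis"
  define S where "S = {i. i < n \<and> open_segment a (p i) \<inter> polygon p n = {}}"
  have S: "S \<subseteq> {..<n}"
    unfolding S_def by auto
  have adjacent: "\<forall>i\<in>S. \<forall>j\<in>S. p i \<noteq> p j \<longrightarrow> adjacent_idx n i j"
    using no_pair unfolding S_def disjoint_eq_subset_Compl Compl_eq_Diff_UNIV by blast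
  obtain d where d: "d \<noteq> 0" "\<forall>i<n. det2 d (p i - a) \<noteq> 0"
    using exists_direction_off_vertices[OF assms(3)] by blast
  obtain j1 j2 where j12: "j1 \<in> S" "j2 \<in> S" "straddles d (p j1 - a) (p j2 - a)"
    using visible_pair_straddling[OF assms(1,3) d(2) assms(4)[rule_format, OF d(1)]]
    unfolding S_def by blast
  have "- d \<noteq> 0" and minus_d: "\<forall>i<n. det2 (- d) (p i - a) \<noteq> 0"
    using d by simp_all
  then obtain j3 j4 where j34: "j3 \<in> S" "j4 \<in> S" "straddles (- d) (p j3 - a) (p j4 - a)"
    using visible_pair_straddling[OF assms(1,3) minus_d assms(4)[rule_format, OF \<open>- d \<noteq> 0\<close>]]
    unfolding S_def by blast
  have "p j1 \<noteq> p j2"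
    using straddles_distinct[OF j12(3)] by auto
  then have "p j3 \<in> {p j1, p j2}" "p j4 \<in> {p j1, p j2}"
    using pairwise_adjacent_at_most_two[OF assms(2) S adjacent j12(1,2)] j34(1,2) by blast+
  then show False
    using straddles_opposite_directions[OF j12(3) j34(3)] by auto
qed

end
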